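(* Consider the linear structural equation model and the quantities defined in the context. Suppose that either Assumption A or Assumption A$'$ holds, and that $\beta_{X\to Y}\beta_{Y\to X}\neq 0$. Then $(\beta_{X\to Y},\beta_{Y\to X})$ is identifiable up to the two points $(\beta_{X\to Y,\mathrm{I}},\beta_{Y\to X,\mathrm{I}})$ and $(\beta_{X\to Y,\mathrm{II}},\beta_{Y\to X,\mathrm{II}})$, i.e. $(\beta_{X\to Y},\beta_{Y\to X})$ equals one of these two points (which are functions of the distribution of the observed data). Moreover, $$\beta_{X\to Y,\mathrm{I}}=1/\beta_{Y\to X,\mathrm{II}},\qquad \beta_{Y\to X,\mathrm{I}}=1/\beta_{X\to Y,\mathrm{II}}.$$
   Context: Observations $(X_i,Y_i,Z_i,U_i)$, $i=1,\dots,n$, are i.i.d.; $X_i,Y_i\in\mathbb{R}$ are observed with finite variance, $Z_i\in\mathbb{R}^p$ is an observed vector of candidate instruments, $U_i$ is unobserved. Assume $E(X_i)=E(Y_i)=0$, $E(Z_i)=0$, and $\Sigma=E(Z_iZ_i^{T})$ invertible. The data satisfy $$Y_i=\beta_{X\to Y}X_i+\pi_Y^{T}Z_i+\xi_Y(U_i)+\zeta_i,\qquad X_i=\beta_{Y\to X}Y_i+\pi_X^{T}Z_i+\xi_X(U_i)+\eta_i,$$ with $\pi_X,\pi_Y\in\mathbb{R}^p$, mean-zero functions $\xi_Y(U_i),\xi_X(U_i)$, $Z_i$ independent of $U_i$, and $E(\zeta_i\mid\eta_i,Z_i,U_i)=E(\eta_i\mid\zeta_i,Z_i,U_i)=0$.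 The matrix $B=\begin{pmatrix}0&\beta_{X\to Y}\\ \beta_{Y\to X}&0\end{pmatrix}$ has spectral norm $<1$, and $(Y_i,X_i)^T=(I-B)^{-1}\{(\pi_Y^TZ_i,\pi_X^TZ_i)^T+(R_{Y,i},R_{X,i})^T\}$ where $R_{Y,i}=\xi_Y(U_i)+\zeta_i$, $R_{X,i}=\xi_X(U_i)+\eta_i$. Then $E(Y_i\mid Z_i)=\gamma_Y^TZ_i$, $E(X_i\mid Z_i)=\gamma_X^TZ_i$ with $\gamma_Y=(\pi_Y+\beta_{X\to Y}\pi_X)/(1-\beta_{X\to Y}\beta_{Y\to X})$, $\gamma_X=(\pi_X+\beta_{Y\to X}\pi_Y)/(1-\beta_{X\to Y}\beta_{Y\to X})$. Sets: $\mathcal{V}_{X\to Y}=\{j:\pi_{X,j}\neq0,\pi_{Y,j}=0\}$, $\mathcal{V}_{Y\to X}=\{j:\pi_{Y,j}\neq0,\pi_{X,j}=0\}$, $\mathcal{V}_{pl}=\{j:\pi_{X,j}\neq0,\pi_{Y,j}\neq0\}$, $\mathcal{S}_X=\{j:\gamma_{X,j}\neq0\}$, $\mathcal{S}_Y=\{j:\gamma_{Y,j}\neq0\}$. Maxima over empty collections are $0$; $\mathbb{1}$ is the indicator. Assumption A: $|\mathcal{V}_{X\to Y}|>\max\big(\max_c|\{j\in\mathcal{V}_{pl}\cap\mathcal{S}_X:\pi_{Y,j}/\gamma_{X,j}=c\}|,\ |\mathcal{V}_{Y\to X}|\mathbb{1}(\beta_{Y\to X}\neq0),\ |\mathcal{V}_{pl}\setminus\mathcal{S}_X|\mathbb{1}(\beta_{Y\to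 X}\neq0)\big)$, and $\mathrm{Cov}(Y_iR_{Y,i},Z_i)\neq0$. Assumption A$'$: $|\mathcal{V}_{Y\to X}|>\max\big(\max_c|\{j\in\mathcal{V}_{pl}\cap\mathcal{S}_Y:\pi_{X,j}/\gamma_{Y,j}=c\}|,\ |\mathcal{V}_{X\to Y}|\mathbb{1}(\beta_{X\to Y}\neq0),\ |\mathcal{V}_{pl}\setminus\mathcal{S}_Y|\mathbb{1}(\beta_{X\to Y}\neq0)\big)$, and $\mathrm{Cov}(X_iR_{X,i},Z_i)\neq0$. Oracle PCH: for an ordered pair $(D,D')\in\{(X,Y),(Y,X)\}$ define $\mathrm{oPCH}(D,D')=(\beta^\star_{D\to D'},\beta^\star_{D'\to D},\mathcal{V}^\star_{D\to D'})$ as follows. Consider $\arg\max_{b\in\mathbb{R}}|\{j\in\mathcal{S}_D:\gamma_{D',j}/\gamma_{D,j}=b\}|$. If it has more than one element, set $\beta^\star_{D\to D'}=\infty$ and $\mathcal{V}^\star_{D\to D'}=\emptyset$ (and then $\beta^\star_{D'\to D}=\infty$). If it has a unique element $b$, set $\beta^\star_{D\to D'}=b$ and $\mathcal{V}^\star_{D\to D'}=\{j\in\mathcal{S}_D:\gamma_{D',j}/\gamma_{D,j}=b\}$; then let $\bar D'=D'-\beta^\star_{D\to D'}D$, $\Lambda=\bar D'-E(\bar D'\mid Z)$, $\theta_D=\Sigma^{-1}E(\Lambda_iD_iZ_i)$, $\theta_{D'}=\Sigma^{-1}E(\Lambda_iD'_iZ_i)$, and set $\beta^\star_{D'\to D}=(\theta_D^T\Sigma\theta_{D'})/(\theta_{D'}^T\Sigma\theta_{D'})$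 if $\theta_{D'}^T\Sigma\theta_{D'}\neq0$ and $\beta^\star_{D'\to D}=\infty$ otherwise. Define $(\beta_{X\to Y,\mathrm{I}},\beta_{Y\to X,\mathrm{I}},\mathcal{V}_{X\to Y,\mathrm{I}})=\mathrm{oPCH}(X,Y)$ and $(\beta_{Y\to X,\mathrm{II}},\beta_{X\to Y,\mathrm{II}},\mathcal{V}_{Y\to X,\mathrm{II}})=\mathrm{oPCH}(Y,X)$. *)

theory Defs
  imports "HOL-Probability.Probability" "HOL-Analysis.Analysis"
begin

definition SigmaZ :: "'a measure \<Rightarrow> ('a \<Rightarrow> real^'p) \<Rightarrow> real^'p^'p" where
  "SigmaZ M Z = (\<chi> i j. integral\<^sup>L M (\<lambda>\<omega>. Z \<omega> $ i * Z \<omega> $ j))"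

definition sigmaZ :: "'a measure \<Rightarrow> ('a \<Rightarrow> real^'p) \<Rightarrow> 'a measure" where
  "sigmaZ M Z = vimage_algebra (space M) Z borel"

definition gammaY :: "real \<Rightarrow> real \<Rightarrow> real^'p \<Rightarrow> real^'p \<Rightarrow> real^'p" where
  "gammaY bXY bYX \<pi>X \<pi>Y = (1 / (1 - bXY * bYX)) *\<^sub>R (\<pi>Y + bXY *\<^sub>R \<pi>X)"
definition gammaX :: "real \<Rightarrow> real \<Rightarrow> real^'p \<Rightarrow> real^'p \<Rightarrow> real^'p" where
  "gammaX bXY bYX \<pi>X \<pi>Y = (1 / (1 - bXY * bYX)) *\<^sub>R (\<pi>X + bYX *\<^sub>R \<pi>Y)"

definition Bmat :: "real \<Rightarrow> real \<Rightarrow> real^2^2" where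
  "Bmat bXY bYX = (\<chi> i j. if i = 1 \<and> j = 2 then bXY else if i = 2 \<and> j = 1 then bYX else 0)"

text \<open>The value infinity is represented by the
  extended real \<infinity>.  gD, gD' are the reduced-form coefficient vectors gamma_D, gamma_D'
  (so that E(D|Z) = gD^T Z, E(D'|Z) = gD'^T Z).\<close>
definition oPCH :: "'a measure \<Rightarrow> ('a \<Rightarrow> real^'p) \<Rightarrow> ('a \<Rightarrow> real) \<Rightarrow> ('a \<Rightarrow> real)
    \<Rightarrow> real^'p \<Rightarrow> real^'p \<Rightarrow> ereal \<times> ereal \<times> 'p set" where
  "oPCH M Z D D' gD gD' =
    (let S = {j. gD $ j \<noteq> 0};
         cnt = (\<lambda>b::real. card {j \<in> S. gD' $ j / gD $ j = b});
         A = {b. \<forall>b'. cnt b' \<le> cnt b}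
     in if \<exists>!b. b \<in> A then
          (let b = (THE b. b \<in> A);
               V = {j \<in> S. gD' $ j / gD $ j = b};
               Dbar = (\<lambda>\<omega>. D' \<omega> - b * D \<omega>);
               Lam = (\<lambda>\<omega>. Dbar \<omega> - real_cond_exp M (sigmaZ M Z) Dbar \<omega>);
               Sig = SigmaZ M Z;
               thD = matrix_inv Sig *v integral\<^sup>L M (\<lambda>\<omega>. (Lam \<omega> * D \<omega>) *\<^sub>R Z \<omega>);
               thD' = matrix_inv Sig *v integral\<^sup>L M (\<lambda>\<omega>. (Lam \<omega> * D' \<omega>) *\<^sub>R Z \<omega>);
               q = thD' \<bullet> (Sig *v thD')
           in (ereal b, if q \<noteq> 0 then ereal ((thD \<bullet> (Sig *v thD')) / q) else \<infinity>, V))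
        else (\<infinity>, \<infinity>, {}))"

end

(*
  Componentwise pi_Y = gamma_Y - beta_XY gamma_X and pi_X = gamma_X - beta_YX gamma_Y.  Hence every
  instrument valid for X -> Y has ratio gamma_Y,j / gamma_X,j = beta_XY, while the instruments with
  any other ratio b lie in a single class bounded by Assumption A: the instruments valid for
  Y -> X (if b beta_YX = 1) or the pleiotropic ones with pi_Y,j / gamma_X,j = b - beta_XY.  So
  beta_XY is the unique plurality ratio, and likewise 1 / beta_XY for the ratios
  gamma_X,j / gamma_Y,j.  For the slope found this way the residual Lambda is a constant multiple
  of R_Y, so theta_D and theta_D' are multiples of Sigma^-1 E(Y R_Y Z), with factors given by the
  moment identity E(X R_Y Z) = beta_YX E(Y R_Y Z); their ratio is beta_YX, resp. 1 / beta_YX.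
  The identity holds because zeta has conditional mean zero given (eta, Z, U), then eta given
  (zeta, Z, U), and what remains vanishes since Z and U are independent.  Under Assumption A'
  the same argument applies with X and Y exchanged.
*)
theory Submission
  imports Defs
begin

section \<open>Conditional expectations and independence\<close>

lemma sets_vimage_algebra_subset:
  assumes "g \<in> measurable N K" "space N = X"
  shows "sets (vimage_algebra X g K) \<subseteq> sets N"
proof -
  have "g \<in> X \<rightarrow> space K" using measurable_space[OF assms(1)] assms(2) by auto
  then show ?thesis using assms by (auto simp: sets_vimage_algebra2 dest: measurable_sets)
qed

lemma subalgebra_vimage_algebra:
  assumes "g \<in> measurable M N"
  shows "subalgebra M (vimage_algebra (space M) g N)"
  unfolding subalgebra_def using sets_vimage_algebra_subset[OF assms refl] by simp

lemma (in prob_space) sigma_finite_subalgebra_vimage_algebra: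
  assumes "g \<in> measurable M N"
  shows "sigma_finite_subalgebra M (vimage_algebra (space M) g N)"
proof -
  have "finite_measure_subalgebra M (vimage_algebra (space M) g N)"
    by unfold_locales (rule subalgebra_vimage_algebra[OF assms])
  then show ?thesis using finite_measure_subalgebra_is_sigma_finite by blast
qed

lemma measurable_vimage_algebra_compose:
  assumes "g \<in> measurable M N" "h \<in> measurable N K"
  shows "(\<lambda>x. h (g x)) \<in> measurable (vimage_algebra (space M) g N) K"
proof -
  have "g \<in> space M \<rightarrow> space N" using measurable_space[OF assms(1)] by auto
  then have "g \<in> measurable (vimage_algebra (space M) g N) N" by (rule measurable_vimage_algebra1)
  then show ?thesis using assms(2) by (rule measurable_compose)
qed

lemma (in prob_space) indep_set_commute: "indep_set A B \<Longrightarrow> indep_set B A"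
  unfolding indep_sets2_eq by (metis (no_types, lifting) Int_commute mult.commute)

lemma (in prob_space) indep_var_subalgebras:
  fixes f g :: "'a \<Rightarrow> 'b::topological_space"
  assumes indep: "indep_set (sets F) (sets G)"
    and sub: "subalgebra M F" "subalgebra M G"
    and f: "f \<in> borel_measurable F" and g: "g \<in> borel_measurable G"
  shows "indep_var borel f borel g"
proof -
  have spaces: "space F = space M" "space G = space M" using sub by (simp_all add: subalgebra_def)
  have "sigma_sets (space M) {f -` A \<inter> space M | A. A \<in> sets borel} \<subseteq> sets F"
    using sets_vimage_algebra_subset[OF f spaces(1)] by (simp add: sets_vimage_algebra)
  moreover have "sigma_sets (space M) {g -` A \<inter> space M | A. A \<in> sets borel} \<subseteq> sets G"
    using sets_vimage_algebra_subset[OF g spaces(2)] by (simp add: sets_vimage_algebra)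
  ultimately have "indep_set (sigma_sets (space M) {f -` A \<inter> space M | A. A \<in> sets borel})
                             (sigma_sets (space M) {g -` A \<inter> space M | A. A \<in> sets borel})"
    using indep unfolding indep_sets2_eq by (meson subset_iff order_trans)
  moreover have "random_variable borel f" "random_variable borel g"
    using measurable_from_subalg[OF sub(1) f] measurable_from_subalg[OF sub(2) g] .
  ultimately show ?thesis unfolding indep_var_eq by simp
qed

lemma (in prob_space) real_cond_exp_indep:
  assumes indep: "indep_set (sets F) (sets G)"
    and F: "sigma_finite_subalgebra M F" and G: "subalgebra M G"
    and g: "g \<in> borel_measurable G" and int: "integrable M g"
  shows "AE x in M. real_cond_exp M F g x = expectation g"
proof -
  interpret F: sigma_finite_subalgebra M F by fact
  show ?thesis
  proof (rule F.real_cond_exp_charact)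
    fix A assume A: "A \<in> sets F"
    have "A \<in> events" using A F.subalg by (auto simp: subalgebra_def)
    have "indep_var borel (indicator A) borel g"
      using indep_var_subalgebras[OF indep F.subalg G _ g] A by simp
    then have "(\<integral>x. indicator A x * g x \<partial>M) = (\<integral>x. indicator A x \<partial>M) * expectation g"
      by (rule indep_var_lebesgue_integral[OF _ _ int]) (simp add: \<open>A \<in> events\<close> emeasure_eq_measure)
    then show "(\<integral>x\<in>A. g x \<partial>M) = (\<integral>x\<in>A. expectation g \<partial>M)"
      by (simp add: set_lebesgue_integral_def)
  qed (use int in auto)
qed

lemma (in sigma_finite_subalgebra) integral_mult_add_cond_exp_zero:
  assumes A: "A \<in> borel_measurable F" and c: "c \<in> borel_measurable F"
    and ic: "integrable M c" and ie: "integrable M e"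
    and ce: "AE x in M. real_cond_exp M F e x = 0"
    and int: "integrable M (\<lambda>x. A x * (c x + e x))"
  shows "integrable M (\<lambda>x. A x * c x)"
    and "(\<integral>x. A x * (c x + e x) \<partial>M) = (\<integral>x. A x * c x \<partial>M)"
proof -
  have "AE x in M. real_cond_exp M F (\<lambda>x. c x + e x) x = real_cond_exp M F c x + real_cond_exp M F e x"
    using ic ie by (rule real_cond_exp_add)
  moreover have "AE x in M. real_cond_exp M F c x = c x"
    using ic c by (rule real_cond_exp_F_meas)
  ultimately have ae: "AE x in M. A x * real_cond_exp M F (\<lambda>x. c x + e x) x = A x * c x"
    using ce by eventually_elim simp
  have ce_meas: "(\<lambda>x. c x + e x) \<in> borel_measurable M" using ic ie by auto
  have Am: "A \<in> borel_measurable M" using measurable_from_subalg[OF subalg A] .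
  have cm: "c \<in> borel_measurable M" using ic by auto
  show "integrable M (\<lambda>x. A x * c x)"
    using integrable_cong_AE[OF _ _ ae] real_cond_exp_intg(1)[OF int A ce_meas] Am cm by simp
  show "(\<integral>x. A x * (c x + e x) \<partial>M) = (\<integral>x. A x * c x \<partial>M)"
    using real_cond_exp_intg(2)[OF int A ce_meas] integral_cong_AE[OF _ _ ae] Am cm by simp
qed

section \<open>Second moments of the instruments\<close>

lemma matrix_inv_mult:
  fixes S :: "'a::semiring_1^'n^'n"
  assumes "invertible S"
  shows "S ** matrix_inv S = mat 1" "matrix_inv S ** S = mat 1"
proof -
  have "\<exists>S'. S ** S' = mat 1 \<and> S' ** S = mat 1" using assms by (simp add: invertible_def)
  then have "S ** matrix_inv S = mat 1 \<and> matrix_inv S ** S = mat 1"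
    unfolding matrix_inv_def by (rule someI_ex)
  then show "S ** matrix_inv S = mat 1" "matrix_inv S ** S = mat 1" by auto
qed

lemma inner_vec_sum: "v \<bullet> (z::real^'n) = (\<Sum>j\<in>UNIV. v $ j * z $ j)"
  by (simp add: inner_vec_def)

lemma inner_square_eq_sum: "(w \<bullet> z)\<^sup>2 = (\<Sum>i\<in>UNIV. w $ i * ((w \<bullet> z) * z $ i))"
  for w z :: "real^'n"
proof -
  have "(w \<bullet> z)\<^sup>2 = (w \<bullet> z) * (\<Sum>i\<in>UNIV. w $ i * z $ i)"
    by (simp add: power2_eq_square inner_vec_def)
  then show ?thesis by (simp add: sum_distrib_left ac_simps)
qed

lemma integrable_inner_mult_component:
  fixes Z :: "'a \<Rightarrow> real^'n"
  assumes "\<And>i j. integrable M (\<lambda>\<omega>. Z \<omega> $ i * Z \<omega> $ j)"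
  shows "integrable M (\<lambda>\<omega>. (v \<bullet> Z \<omega>) * Z \<omega> $ i)"
proof -
  have "(\<lambda>\<omega>. (v \<bullet> Z \<omega>) * Z \<omega> $ i) = (\<lambda>\<omega>. \<Sum>j\<in>UNIV. v $ j * (Z \<omega> $ j * Z \<omega> $ i))"
    unfolding inner_vec_sum by (auto simp: sum_distrib_right mult.assoc)
  then show ?thesis using assms by auto
qed

lemma SigmaZ_mult_vec_nth:
  fixes Z :: "'a \<Rightarrow> real^'n"
  assumes "\<And>i j. integrable M (\<lambda>\<omega>. Z \<omega> $ i * Z \<omega> $ j)"
  shows "(SigmaZ M Z *v w) $ i = (\<integral>\<omega>. (w \<bullet> Z \<omega>) * Z \<omega> $ i \<partial>M)"
proof -
  have "(SigmaZ M Z *v w) $ i = (\<Sum>j\<in>UNIV. (\<integral>\<omega>. w $ j * (Z \<omega> $ j * Z \<omega> $ i) \<partial>M))"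
    by (simp add: SigmaZ_def matrix_vector_mult_def mult.commute)
  also have "\<dots> = (\<integral>\<omega>. (\<Sum>j\<in>UNIV. w $ j * (Z \<omega> $ j * Z \<omega> $ i)) \<partial>M)"
    using assms by (simp add: Bochner_Integration.integral_sum)
  also have "\<dots> = (\<integral>\<omega>. (w \<bullet> Z \<omega>) * Z \<omega> $ i \<partial>M)"
    unfolding inner_vec_sum by (simp add: sum_distrib_right mult.assoc)
  finally show ?thesis .
qed

lemma SigmaZ_quadratic_form:
  fixes Z :: "'a \<Rightarrow> real^'n"
  assumes "\<And>i j. integrable M (\<lambda>\<omega>. Z \<omega> $ i * Z \<omega> $ j)"
  shows "w \<bullet> (SigmaZ M Z *v w) = (\<integral>\<omega>. (w \<bullet> Z \<omega>)\<^sup>2 \<partial>M)"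
proof -
  have "w \<bullet> (SigmaZ M Z *v w) = (\<Sum>i\<in>UNIV. (\<integral>\<omega>. w $ i * ((w \<bullet> Z \<omega>) * Z \<omega> $ i) \<partial>M))"
    unfolding inner_vec_sum SigmaZ_mult_vec_nth[OF assms] by simp
  also have "\<dots> = (\<integral>\<omega>. (\<Sum>i\<in>UNIV. w $ i * ((w \<bullet> Z \<omega>) * Z \<omega> $ i)) \<partial>M)"
    using integrable_inner_mult_component[OF assms] by (simp add: Bochner_Integration.integral_sum)
  also have "\<dots> = (\<integral>\<omega>. (w \<bullet> Z \<omega>)\<^sup>2 \<partial>M)"
    by (simp add: inner_square_eq_sum)
  finally show ?thesis .
qed

lemma SigmaZ_quadratic_form_nonzero:
  fixes Z :: "'a \<Rightarrow> real^'n"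
  assumes Zmom: "\<And>i j. integrable M (\<lambda>\<omega>. Z \<omega> $ i * Z \<omega> $ j)"
    and inv: "invertible (SigmaZ M Z)" and "w \<noteq> 0"
  shows "w \<bullet> (SigmaZ M Z *v w) \<noteq> 0"
proof
  assume "w \<bullet> (SigmaZ M Z *v w) = 0"
  moreover have "integrable M (\<lambda>\<omega>. (w \<bullet> Z \<omega>)\<^sup>2)"
    unfolding inner_square_eq_sum using integrable_inner_mult_component[OF Zmom] by simp
  ultimately have "AE \<omega> in M. w \<bullet> Z \<omega> = 0"
    unfolding SigmaZ_quadratic_form[OF Zmom] by (simp add: integral_nonneg_eq_0_iff_AE)
  then have "(SigmaZ M Z *v w) $ i = 0" for i
    unfolding SigmaZ_mult_vec_nth[OF Zmom] by (auto intro: integral_eq_zero_AE)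
  then have "SigmaZ M Z *v w = 0" by (simp add: vec_eq_iff)
  then have "matrix_inv (SigmaZ M Z) *v (SigmaZ M Z *v w) = 0" by simp
  then have "w = 0" unfolding matrix_vector_mul_assoc matrix_inv_mult(2)[OF inv] by simp
  with \<open>w \<noteq> 0\<close> show False by simp
qed

section \<open>Plurality of reduced-form ratios\<close>

definition ratio_count :: "real^'p \<Rightarrow> real^'p \<Rightarrow> real \<Rightarrow> nat" where
  "ratio_count gD gD' b = card {j. gD $ j \<noteq> 0 \<and> gD' $ j / gD $ j = b}"

text \<open>Assumption A for the direction \<open>D \<rightarrow> D'\<close>, without its indicator factors: they equal 1
  once the reverse effect is nonzero.\<close>
definition plurality_valid :: "real^'p \<Rightarrow> real^'p \<Rightarrow> real^'p \<Rightarrow> bool" where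
  "plurality_valid \<pi>D \<pi>D' gD \<longleftrightarrow>
     (let n = card {j. \<pi>D $ j \<noteq> 0 \<and> \<pi>D' $ j = 0} in
       (\<forall>c. card {j. \<pi>D $ j \<noteq> 0 \<and> \<pi>D' $ j \<noteq> 0 \<and> gD $ j \<noteq> 0 \<and> \<pi>D' $ j / gD $ j = c} < n) \<and>
       card {j. \<pi>D' $ j \<noteq> 0 \<and> \<pi>D $ j = 0} < n \<and>
       card {j. \<pi>D $ j \<noteq> 0 \<and> \<pi>D' $ j \<noteq> 0 \<and> gD $ j = 0} < n)"

lemma plurality_validI:
  fixes \<pi>D \<pi>D' gD :: "real^'p"
  defines "Vpl \<equiv> {j. \<pi>D $ j \<noteq> 0 \<and> \<pi>D' $ j \<noteq> 0}" and "S \<equiv> {j. gD $ j \<noteq> 0}"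
  assumes "card {j. \<pi>D $ j \<noteq> 0 \<and> \<pi>D' $ j = 0} >
             max (Max ((\<lambda>c. card {j \<in> Vpl \<inter> S. \<pi>D' $ j / gD $ j = c}) ` UNIV))
                 (max (card {j. \<pi>D' $ j \<noteq> 0 \<and> \<pi>D $ j = 0}) (card (Vpl - S)))"
  shows "plurality_valid \<pi>D \<pi>D' gD"
proof -
  let ?pl = "\<lambda>c. card {j \<in> Vpl \<inter> S. \<pi>D' $ j / gD $ j = c}"
  have "finite (?pl ` UNIV)"
    by (rule finite_subset[of _ "{..CARD('p)}"]) (auto intro: card_mono)
  then have "?pl c \<le> Max (?pl ` UNIV)" for c
    by (rule Max_ge) simp
  moreover have "{j \<in> Vpl \<inter> S. \<pi>D' $ j / gD $ j = c}
      = {j. \<pi>D $ j \<noteq> 0 \<and> \<pi>D' $ j \<noteq> 0 \<and> gD $ j \<noteq> 0 \<and> \<pi>D' $ j / gD $ j = c}" for c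
    unfolding Vpl_def S_def by auto
  moreover have "Vpl - S = {j. \<pi>D $ j \<noteq> 0 \<and> \<pi>D' $ j \<noteq> 0 \<and> gD $ j = 0}"
    unfolding Vpl_def S_def by auto
  ultimately show ?thesis
    using assms(3) unfolding plurality_valid_def Let_def max_less_iff_conj
    by (metis (no_types, lifting) le_less_trans)
qed

lemma pi_eq_reduced_form:
  fixes \<pi>X \<pi>Y :: "real^'p"
  assumes "bXY * bYX \<noteq> 1"
  shows "\<pi>Y $ j = gammaY bXY bYX \<pi>X \<pi>Y $ j - bXY * gammaX bXY bYX \<pi>X \<pi>Y $ j"
    and "\<pi>X $ j = gammaX bXY bYX \<pi>X \<pi>Y $ j - bYX * gammaY bXY bYX \<pi>X \<pi>Y $ j"
proof -
  define k where "k = 1 - bXY * bYX"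
  have "k \<noteq> 0" using assms unfolding k_def by simp
  have gX: "gammaX bXY bYX \<pi>X \<pi>Y $ j = (\<pi>X $ j + bYX * \<pi>Y $ j) / k"
    and gY: "gammaY bXY bYX \<pi>X \<pi>Y $ j = (\<pi>Y $ j + bXY * \<pi>X $ j) / k"
    unfolding gammaX_def gammaY_def k_def by simp_all
  have "gammaY bXY bYX \<pi>X \<pi>Y $ j - bXY * gammaX bXY bYX \<pi>X \<pi>Y $ j
      = ((\<pi>Y $ j + bXY * \<pi>X $ j) - bXY * (\<pi>X $ j + bYX * \<pi>Y $ j)) / k"
    unfolding gX gY by (simp add: diff_divide_distrib)
  also have "\<dots> = \<pi>Y $ j * k / k"
    by (rule arg_cong[where f="\<lambda>x. x / k"]) (simp add: k_def algebra_simps)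
  finally have "gammaY bXY bYX \<pi>X \<pi>Y $ j - bXY * gammaX bXY bYX \<pi>X \<pi>Y $ j = \<pi>Y $ j * k / k" .
  then show "\<pi>Y $ j = gammaY bXY bYX \<pi>X \<pi>Y $ j - bXY * gammaX bXY bYX \<pi>X \<pi>Y $ j"
    using \<open>k \<noteq> 0\<close> by simp
  have "gammaX bXY bYX \<pi>X \<pi>Y $ j - bYX * gammaY bXY bYX \<pi>X \<pi>Y $ j
      = ((\<pi>X $ j + bYX * \<pi>Y $ j) - bYX * (\<pi>Y $ j + bXY * \<pi>X $ j)) / k"
    unfolding gX gY by (simp add: diff_divide_distrib)
  also have "\<dots> = \<pi>X $ j * k / k"
    by (rule arg_cong[where f="\<lambda>x. x / k"]) (simp add: k_def algebra_simps)
  finally have "gammaX bXY bYX \<pi>X \<pi>Y $ j - bYX * gammaY bXY bYX \<pi>X \<pi>Y $ j = \<pi>X $ j * k / k" .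
  then show "\<pi>X $ j = gammaX bXY bYX \<pi>X \<pi>Y $ j - bYX * gammaY bXY bYX \<pi>X \<pi>Y $ j"
    using \<open>k \<noteq> 0\<close> by simp
qed

lemma gammaX_swap: "gammaX bXY bYX \<pi>X \<pi>Y = gammaY bYX bXY \<pi>Y \<pi>X"
  and gammaY_swap: "gammaY bXY bYX \<pi>X \<pi>Y = gammaX bYX bXY \<pi>Y \<pi>X"
  unfolding gammaX_def gammaY_def by (simp_all add: mult.commute)

lemma ratio_count_lt_if_subset:
  assumes "{j. gD $ j \<noteq> 0 \<and> gD' $ j / gD $ j = \<beta>} \<subseteq> S" and "card S < n"
  shows "ratio_count gD gD' \<beta> < n"
  using card_mono[OF finite assms(1)] assms(2) unfolding ratio_count_def by linarith

lemma plurality_validD: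
  assumes "plurality_valid \<pi>D \<pi>D' gD"
  defines "n \<equiv> card {j. \<pi>D $ j \<noteq> 0 \<and> \<pi>D' $ j = 0}"
  shows "card {j. \<pi>D $ j \<noteq> 0 \<and> \<pi>D' $ j \<noteq> 0 \<and> gD $ j \<noteq> 0 \<and> \<pi>D' $ j / gD $ j = c} < n"
    and "card {j. \<pi>D' $ j \<noteq> 0 \<and> \<pi>D $ j = 0} < n"
    and "card {j. \<pi>D $ j \<noteq> 0 \<and> \<pi>D' $ j \<noteq> 0 \<and> gD $ j = 0} < n"
  using assms unfolding plurality_valid_def Let_def by auto

lemma ratio_count_lt_causal:
  fixes gD gD' \<pi>D \<pi>D' :: "real^'p"
  assumes \<pi>D': "\<And>j. \<pi>D' $ j = gD' $ j - b * gD $ j"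
    and \<pi>D: "\<And>j. \<pi>D $ j = gD $ j - b' * gD' $ j"
    and pv: "plurality_valid \<pi>D \<pi>D' gD" and "\<beta> \<noteq> b"
  shows "ratio_count gD gD' \<beta> < ratio_count gD gD' b"
proof -
  let ?valid = "{j. \<pi>D $ j \<noteq> 0 \<and> \<pi>D' $ j = 0}"
  have ratio: "gD $ j \<noteq> 0 \<and> \<pi>D' $ j = (\<beta> - b) * gD $ j \<and> \<pi>D $ j = (1 - b' * \<beta>) * gD $ j"
    if "gD $ j \<noteq> 0" "gD' $ j / gD $ j = \<beta>" for j \<beta>
    using that \<pi>D[of j] \<pi>D'[of j] by (auto simp: field_simps)
  have "?valid \<subseteq> {j. gD $ j \<noteq> 0 \<and> gD' $ j / gD $ j = b}"
  proof
    fix j assume j: "j \<in> ?valid"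
    then have "gD' $ j = b * gD $ j" "\<pi>D $ j = (1 - b' * b) * gD $ j"
      using \<pi>D[of j] \<pi>D'[of j] by (auto simp: algebra_simps)
    with j show "j \<in> {j. gD $ j \<noteq> 0 \<and> gD' $ j / gD $ j = b}" by auto
  qed
  then have "card ?valid \<le> ratio_count gD gD' b"
    unfolding ratio_count_def by (rule card_mono[OF finite])
  moreover have "ratio_count gD gD' \<beta> < card ?valid"
  proof (cases "b' * \<beta> = 1")
    case True
    show ?thesis
      by (rule ratio_count_lt_if_subset[OF _ plurality_validD(2)[OF pv]])
        (use ratio True \<open>\<beta> \<noteq> b\<close> in auto)
  next
    case False
    show ?thesis
      by (rule ratio_count_lt_if_subset[OF _ plurality_validD(1)[OF pv, of "\<beta> - b"]])
        (use ratio False \<open>\<beta> \<noteq> b\<close> in auto)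
  qed
  ultimately show ?thesis by linarith
qed

text \<open>An instrument with reversed ratio \<open>\<beta> \<noteq> 1 / b\<close> is valid for \<open>D' \<rightarrow> D\<close> if \<open>\<beta> = b'\<close>, pleiotropic
  with \<open>gD = 0\<close> if \<open>\<beta> = 0\<close>, and otherwise pleiotropic with \<open>\<pi>D' / gD = (1 - b \<beta>) / \<beta>\<close>.\<close>
lemma ratio_count_lt_reverse_causal:
  fixes gD gD' \<pi>D \<pi>D' :: "real^'p"
  assumes \<pi>D': "\<And>j. \<pi>D' $ j = gD' $ j - b * gD $ j"
    and \<pi>D: "\<And>j. \<pi>D $ j = gD $ j - b' * gD' $ j"
    and "b \<noteq> 0" "b' \<noteq> 0"
    and pv: "plurality_valid \<pi>D \<pi>D' gD" and "\<beta> \<noteq> 1 / b"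
  shows "ratio_count gD' gD \<beta> < ratio_count gD' gD (1 / b)"
proof -
  let ?valid = "{j. \<pi>D $ j \<noteq> 0 \<and> \<pi>D' $ j = 0}"
  have ratio: "gD' $ j \<noteq> 0 \<and> gD $ j = \<beta> * gD' $ j \<and>
      \<pi>D $ j = (\<beta> - b') * gD' $ j \<and> \<pi>D' $ j = (1 - b * \<beta>) * gD' $ j"
    if "gD' $ j \<noteq> 0" "gD $ j / gD' $ j = \<beta>" for j \<beta>
    using that \<pi>D[of j] \<pi>D'[of j] by (auto simp: field_simps)
  have "1 - b * \<beta> \<noteq> 0" using \<open>\<beta> \<noteq> 1 / b\<close> \<open>b \<noteq> 0\<close> by (auto simp: field_simps)
  have "?valid \<subseteq> {j. gD' $ j \<noteq> 0 \<and> gD $ j / gD' $ j = 1 / b}"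
  proof
    fix j assume j: "j \<in> ?valid"
    then have "gD' $ j = b * gD $ j" "\<pi>D $ j = (1 - b' * b) * gD $ j"
      using \<pi>D[of j] \<pi>D'[of j] by (auto simp: algebra_simps)
    with j \<open>b \<noteq> 0\<close> show "j \<in> {j. gD' $ j \<noteq> 0 \<and> gD $ j / gD' $ j = 1 / b}" by auto
  qed
  then have "card ?valid \<le> ratio_count gD' gD (1 / b)"
    unfolding ratio_count_def by (rule card_mono[OF finite])
  moreover have "ratio_count gD' gD \<beta> < card ?valid"
  proof -
    consider "\<beta> = b'" | "\<beta> = 0" | "\<beta> \<noteq> b'" "\<beta> \<noteq> 0" by blast
    then show ?thesis
    proof cases
      case 1
      show ?thesis
        by (rule ratio_count_lt_if_subset[OF _ plurality_validD(2)[OF pv]])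
          (use ratio 1 \<open>1 - b * \<beta> \<noteq> 0\<close> in auto)
    next
      case 2
      show ?thesis
        by (rule ratio_count_lt_if_subset[OF _ plurality_validD(3)[OF pv]])
          (use ratio 2 \<open>1 - b * \<beta> \<noteq> 0\<close> \<open>b' \<noteq> 0\<close> in auto)
    next
      case 3
      show ?thesis
        by (rule ratio_count_lt_if_subset[OF _ plurality_validD(1)[OF pv, of "(1 - b * \<beta>) / \<beta>"]])
          (use ratio 3 \<open>1 - b * \<beta> \<noteq> 0\<close> in auto)
    qed
  qed
  ultimately show ?thesis by linarith
qed

definition projection_ratio :: "real^'p^'p \<Rightarrow> real^'p \<Rightarrow> real^'p \<Rightarrow> ereal" where
  "projection_ratio S a a' =
    (let \<theta> = matrix_inv S *v a; \<theta>' = matrix_inv S *v a'; q = \<theta>' \<bullet> (S *v \<theta>')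
     in if q \<noteq> 0 then ereal ((\<theta> \<bullet> (S *v \<theta>')) / q) else \<infinity>)"

lemma projection_ratio_scaleR:
  fixes S :: "real^'p^'p"
  assumes inv: "invertible S" and nondeg: "\<And>w. w \<noteq> 0 \<Longrightarrow> w \<bullet> (S *v w) \<noteq> 0"
    and "v \<noteq> 0" "\<beta> \<noteq> 0"
  shows "projection_ratio S (\<alpha> *\<^sub>R v) (\<beta> *\<^sub>R v) = ereal (\<alpha> / \<beta>)"
proof -
  define w where "w = matrix_inv S *v v"
  have "S *v w = v" unfolding w_def matrix_vector_mul_assoc matrix_inv_mult(1)[OF inv] by simp
  with \<open>v \<noteq> 0\<close> have "w \<noteq> 0" by auto
  then have "w \<bullet> (S *v w) \<noteq> 0" by (rule nondeg)
  with \<open>\<beta> \<noteq> 0\<close> show ?thesis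
    unfolding projection_ratio_def Let_def
    by (simp add: matrix_vector_mult_scaleR w_def[symmetric])
qed

definition pch_residual ::
    "'a measure \<Rightarrow> ('a \<Rightarrow> real^'p) \<Rightarrow> real \<Rightarrow> ('a \<Rightarrow> real) \<Rightarrow> ('a \<Rightarrow> real) \<Rightarrow> 'a \<Rightarrow> real" where
  "pch_residual M Z b D D' \<omega> =
     (D' \<omega> - b * D \<omega>) - real_cond_exp M (sigmaZ M Z) (\<lambda>\<omega>. D' \<omega> - b * D \<omega>) \<omega>"

lemma oPCH_unique_plurality:
  assumes "\<And>\<beta>. \<beta> \<noteq> b \<Longrightarrow> ratio_count gD gD' \<beta> < ratio_count gD gD' b"
  shows "fst (oPCH M Z D D' gD gD') = ereal b"
    and "fst (snd (oPCH M Z D D' gD gD')) = projection_ratio (SigmaZ M Z)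
           (\<integral>\<omega>. (pch_residual M Z b D D' \<omega> * D \<omega>) *\<^sub>R Z \<omega> \<partial>M)
           (\<integral>\<omega>. (pch_residual M Z b D D' \<omega> * D' \<omega>) *\<^sub>R Z \<omega> \<partial>M)"
proof -
  have "{\<beta>. \<forall>\<beta>'. ratio_count gD gD' \<beta>' \<le> ratio_count gD gD' \<beta>} = {b}"
  proof safe
    fix \<beta> assume "\<forall>\<beta>'. ratio_count gD gD' \<beta>' \<le> ratio_count gD gD' \<beta>"
    then show "\<beta> = b" using assms[of \<beta>] by (meson leD)
  qed (metis assms less_imp_le order_refl)
  then have "{\<beta>. \<forall>\<beta>'. card {j \<in> {j. gD $ j \<noteq> 0}. gD' $ j / gD $ j = \<beta>'}
                  \<le> card {j \<in> {j. gD $ j \<noteq> 0}. gD' $ j / gD $ j = \<beta>}} = {b}"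
    by (simp add: ratio_count_def)
  then show "fst (oPCH M Z D D' gD gD') = ereal b"
    and "fst (snd (oPCH M Z D D' gD gD')) = projection_ratio (SigmaZ M Z)
           (\<integral>\<omega>. (pch_residual M Z b D D' \<omega> * D \<omega>) *\<^sub>R Z \<omega> \<partial>M)
           (\<integral>\<omega>. (pch_residual M Z b D D' \<omega> * D' \<omega>) *\<^sub>R Z \<omega> \<partial>M)"
    unfolding oPCH_def projection_ratio_def pch_residual_def Let_def by simp_all
qed

section \<open>The linear structural equation model\<close>

lemma vec_nth_borel_measurable[measurable (raw)]:
  "f \<in> borel_measurable M \<Longrightarrow> (\<lambda>x. (f x :: real^'p) $ i) \<in> borel_measurable M"
  using measurable_compose[OF _ borel_measurable_nth] .

lemma
  fixes Z :: "'a \<Rightarrow> real^'p"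
  assumes "integrable M (\<lambda>\<omega>. a \<omega> *\<^sub>R Z \<omega>)"
  shows integrable_scaleR_vec_nth: "integrable M (\<lambda>\<omega>. a \<omega> * Z \<omega> $ k)"
    and integral_scaleR_vec_nth: "(\<integral>\<omega>. a \<omega> *\<^sub>R Z \<omega> \<partial>M) $ k = (\<integral>\<omega>. a \<omega> * Z \<omega> $ k \<partial>M)"
  using integrable_bounded_linear[OF bounded_linear_vec_nth[of k] assms]
    integral_bounded_linear[OF bounded_linear_vec_nth[of k] assms] by simp_all

lemma onorm_Bmat_less_one_abs_mult:
  assumes "onorm (\<lambda>v. Bmat bXY bYX *v v) < 1"
  shows "\<bar>bXY * bYX\<bar> < 1"
proof -
  have "\<bar>column j (Bmat bXY bYX) $ i\<bar> \<le> onorm ((*v) (Bmat bXY bYX))" for i j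
    using component_le_norm_cart norm_column_le_onorm order_trans by blast
  from this[of 2 1] this[of 1 2] assms have "\<bar>bXY\<bar> < 1" "\<bar>bYX\<bar> < 1"
    by (simp_all add: column_def Bmat_def)
  then show ?thesis using mult_strict_mono[of "\<bar>bXY\<bar>" 1 "\<bar>bYX\<bar>" 1] by (simp add: abs_mult)
qed

locale linear_sem = prob_space M for M :: "'a measure" +
  fixes MU :: "'u measure"
    and X Y \<zeta> \<eta> :: "'a \<Rightarrow> real" and Z :: "'a \<Rightarrow> real^'p" and U :: "'a \<Rightarrow> 'u"
    and \<xi>Y \<xi>X :: "'u \<Rightarrow> real" and \<pi>X \<pi>Y :: "real^'p" and bXY bYX :: real
  assumes mX: "X \<in> borel_measurable M" and mY: "Y \<in> borel_measurable M"
    and mZ: "Z \<in> borel_measurable M"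
    and m\<zeta>: "\<zeta> \<in> borel_measurable M" and m\<eta>: "\<eta> \<in> borel_measurable M"
    and mU: "U \<in> measurable M MU"
    and m\<xi>Y: "\<xi>Y \<in> borel_measurable MU" and m\<xi>X: "\<xi>X \<in> borel_measurable MU"
    and Zmom: "\<And>i j. integrable M (\<lambda>\<omega>. Z \<omega> $ i * Z \<omega> $ j)"
    and EZ: "integral\<^sup>L M Z = 0"
    and eqY: "\<forall>\<omega>\<in>space M. Y \<omega> = bXY * X \<omega> + \<pi>Y \<bullet> Z \<omega> + \<xi>Y (U \<omega>) + \<zeta> \<omega>"
    and eqX: "\<forall>\<omega>\<in>space M. X \<omega> = bYX * Y \<omega> + \<pi>X \<bullet> Z \<omega> + \<xi>X (U \<omega>) + \<eta> \<omega>"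
    and i\<xi>Y: "integrable M (\<lambda>\<omega>. \<xi>Y (U \<omega>))" and E\<xi>Y: "integral\<^sup>L M (\<lambda>\<omega>. \<xi>Y (U \<omega>)) = 0"
    and i\<xi>X: "integrable M (\<lambda>\<omega>. \<xi>X (U \<omega>))"
    and indep: "indep_set (sets (vimage_algebra (space M) Z borel)) (sets (vimage_algebra (space M) U MU))"
    and i\<zeta>: "integrable M \<zeta>"
    and ce\<zeta>: "AE \<omega> in M. real_cond_exp M
          (vimage_algebra (space M) (\<lambda>\<omega>. (\<eta> \<omega>, Z \<omega>, U \<omega>)) (borel \<Otimes>\<^sub>M borel \<Otimes>\<^sub>M MU)) \<zeta> \<omega> = 0"
    and i\<eta>: "integrable M \<eta>"
    and ce\<eta>: "AE \<omega> in M. real_cond_exp M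
          (vimage_algebra (space M) (\<lambda>\<omega>. (\<zeta> \<omega>, Z \<omega>, U \<omega>)) (borel \<Otimes>\<^sub>M borel \<Otimes>\<^sub>M MU)) \<eta> \<omega> = 0"
    and momY: "integrable M (\<lambda>\<omega>. (Y \<omega> * (\<xi>Y (U \<omega>) + \<zeta> \<omega>)) *\<^sub>R Z \<omega>)"
    and momX: "integrable M (\<lambda>\<omega>. (X \<omega> * (\<xi>Y (U \<omega>) + \<zeta> \<omega>)) *\<^sub>R Z \<omega>)"
begin

lemmas [measurable] = mX mY mZ m\<zeta> m\<eta> mU m\<xi>Y m\<xi>X

abbreviation "sigmaU \<equiv> vimage_algebra (space M) U MU"
abbreviation "sigma\<eta>ZU \<equiv> vimage_algebra (space M) (\<lambda>\<omega>. (\<eta> \<omega>, Z \<omega>, U \<omega>)) (borel \<Otimes>\<^sub>M borel \<Otimes>\<^sub>M MU)"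
abbreviation "sigma\<zeta>ZU \<equiv> vimage_algebra (space M) (\<lambda>\<omega>. (\<zeta> \<omega>, Z \<omega>, U \<omega>)) (borel \<Otimes>\<^sub>M borel \<Otimes>\<^sub>M MU)"
abbreviation "gX \<equiv> gammaX bXY bYX \<pi>X \<pi>Y"
abbreviation "gY \<equiv> gammaY bXY bYX \<pi>X \<pi>Y"

lemma measurable_\<eta>ZU: "(\<lambda>\<omega>. (\<eta> \<omega>, Z \<omega>, U \<omega>)) \<in> measurable M (borel \<Otimes>\<^sub>M borel \<Otimes>\<^sub>M MU)"
  by measurable

lemma measurable_\<zeta>ZU: "(\<lambda>\<omega>. (\<zeta> \<omega>, Z \<omega>, U \<omega>)) \<in> measurable M (borel \<Otimes>\<^sub>M borel \<Otimes>\<^sub>M MU)"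
  by measurable

lemma sigma_finite_sigmaZ: "sigma_finite_subalgebra M (sigmaZ M Z)"
  unfolding sigmaZ_def by (rule sigma_finite_subalgebra_vimage_algebra[OF mZ])

lemma sigma_finite_sigmaU: "sigma_finite_subalgebra M sigmaU"
  by (rule sigma_finite_subalgebra_vimage_algebra[OF mU])

lemma sigma_finite_sigma\<eta>ZU: "sigma_finite_subalgebra M sigma\<eta>ZU"
  by (rule sigma_finite_subalgebra_vimage_algebra[OF measurable_\<eta>ZU])

lemma sigma_finite_sigma\<zeta>ZU: "sigma_finite_subalgebra M sigma\<zeta>ZU"
  by (rule sigma_finite_subalgebra_vimage_algebra[OF measurable_\<zeta>ZU])

lemma measurable_sigmaZ: "h \<in> borel_measurable borel \<Longrightarrow> (\<lambda>\<omega>. h (Z \<omega>)) \<in> borel_measurable (sigmaZ M Z)"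
  unfolding sigmaZ_def by (rule measurable_vimage_algebra_compose[OF mZ])

lemma measurable_sigmaU: "h \<in> borel_measurable MU \<Longrightarrow> (\<lambda>\<omega>. h (U \<omega>)) \<in> borel_measurable sigmaU"
  by (rule measurable_vimage_algebra_compose[OF mU])

lemma measurable_sigma\<eta>ZU:
  "h \<in> borel_measurable (borel \<Otimes>\<^sub>M borel \<Otimes>\<^sub>M MU) \<Longrightarrow> (\<lambda>\<omega>. h (\<eta> \<omega>, Z \<omega>, U \<omega>)) \<in> borel_measurable sigma\<eta>ZU"
  by (rule measurable_vimage_algebra_compose[OF measurable_\<eta>ZU])

lemma measurable_sigma\<zeta>ZU:
  "h \<in> borel_measurable (borel \<Otimes>\<^sub>M borel \<Otimes>\<^sub>M MU) \<Longrightarrow> (\<lambda>\<omega>. h (\<zeta> \<omega>, Z \<omega>, U \<omega>)) \<in> borel_measurable sigma\<zeta>ZU"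
  by (rule measurable_vimage_algebra_compose[OF measurable_\<zeta>ZU])

lemma integrable_Z_component: "integrable M (\<lambda>\<omega>. Z \<omega> $ i)"
proof (rule square_integrable_imp_integrable)
  show "integrable M (\<lambda>\<omega>. (Z \<omega> $ i)\<^sup>2)" using Zmom[of i i] by (simp add: power2_eq_square)
qed measurable

lemma integral_Z_component: "(\<integral>\<omega>. Z \<omega> $ i \<partial>M) = 0"
proof -
  have "integrable M Z"
  proof (rule Bochner_Integration.integrable_bound[of M "\<lambda>\<omega>. \<Sum>i\<in>UNIV. \<bar>Z \<omega> $ i\<bar>"])
    show "integrable M (\<lambda>\<omega>. \<Sum>i\<in>UNIV. \<bar>Z \<omega> $ i\<bar>)" using integrable_Z_component by auto
    show "AE \<omega> in M. norm (Z \<omega>) \<le> norm (\<Sum>i\<in>UNIV. \<bar>Z \<omega> $ i\<bar>)"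
      using norm_le_l1_cart by (auto intro!: AE_I2 simp: sum_nonneg)
  qed measurable
  then have "(\<integral>\<omega>. Z \<omega> $ i \<partial>M) = integral\<^sup>L M Z $ i"
    by (rule integral_bounded_linear[OF bounded_linear_vec_nth])
  with EZ show ?thesis by simp
qed

lemma integrable_inner_Z: "integrable M (\<lambda>\<omega>. v \<bullet> Z \<omega>)"
  unfolding inner_vec_sum using integrable_Z_component by auto

lemma cond_exp_RY: "AE \<omega> in M. real_cond_exp M (sigmaZ M Z) (\<lambda>\<omega>. \<xi>Y (U \<omega>) + \<zeta> \<omega>) \<omega> = 0"
proof -
  interpret S: sigma_finite_subalgebra M "sigmaZ M Z" by (rule sigma_finite_sigmaZ)
  interpret G: sigma_finite_subalgebra M sigma\<eta>ZU by (rule sigma_finite_sigma\<eta>ZU)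
  have "subalgebra sigma\<eta>ZU (sigmaZ M Z)"
    using sets_vimage_algebra_subset[OF measurable_sigma\<eta>ZU[of "\<lambda>(_, z, _). z"]]
    unfolding subalgebra_def sigmaZ_def by simp
  with G.subalg have "AE \<omega> in M. real_cond_exp M (sigmaZ M Z) (real_cond_exp M sigma\<eta>ZU \<zeta>) \<omega>
      = real_cond_exp M (sigmaZ M Z) \<zeta> \<omega>"
    using i\<zeta> by (rule S.real_cond_exp_nested_subalg)
  moreover have "AE \<omega> in M. real_cond_exp M (sigmaZ M Z) (real_cond_exp M sigma\<eta>ZU \<zeta>) \<omega>
      = real_cond_exp M (sigmaZ M Z) (\<lambda>_. 0) \<omega>"
    by (rule S.real_cond_exp_cong[OF ce\<zeta>]) (use borel_measurable_cond_exp2 in auto)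
  moreover have "AE \<omega> in M. real_cond_exp M (sigmaZ M Z) (\<lambda>_. 0) \<omega> = 0"
    by (rule S.real_cond_exp_F_meas) auto
  moreover have "AE \<omega> in M. real_cond_exp M (sigmaZ M Z) (\<lambda>\<omega>. \<xi>Y (U \<omega>)) \<omega> = 0"
    using real_cond_exp_indep[OF indep[folded sigmaZ_def] sigma_finite_sigmaZ
        subalgebra_vimage_algebra[OF mU] measurable_sigmaU[OF m\<xi>Y] i\<xi>Y] E\<xi>Y by simp
  moreover have "AE \<omega> in M. real_cond_exp M (sigmaZ M Z) (\<lambda>\<omega>. \<xi>Y (U \<omega>) + \<zeta> \<omega>) \<omega>
      = real_cond_exp M (sigmaZ M Z) (\<lambda>\<omega>. \<xi>Y (U \<omega>)) \<omega> + real_cond_exp M (sigmaZ M Z) \<zeta> \<omega>"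
    by (rule S.real_cond_exp_add[OF i\<xi>Y i\<zeta>])
  ultimately show ?thesis by eventually_elim simp
qed

lemma pch_residual_measurable[measurable]:
  assumes [measurable]: "D \<in> borel_measurable M" "D' \<in> borel_measurable M"
  shows "pch_residual M Z b D D' \<in> borel_measurable M"
proof -
  interpret S: sigma_finite_subalgebra M "sigmaZ M Z" by (rule sigma_finite_sigmaZ)
  show ?thesis unfolding pch_residual_def[abs_def] by measurable
qed

lemma pch_residual_eq:
  assumes [measurable]: "D \<in> borel_measurable M" "D' \<in> borel_measurable M"
    and D: "\<And>\<omega>. \<omega> \<in> space M \<Longrightarrow> D' \<omega> - b * D \<omega> = c * (Y \<omega> - bXY * X \<omega>)"
  shows "AE \<omega> in M. pch_residual M Z b D D' \<omega> = c * (\<xi>Y (U \<omega>) + \<zeta> \<omega>)"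
proof -
  interpret S: sigma_finite_subalgebra M "sigmaZ M Z" by (rule sigma_finite_sigmaZ)
  define f where "f \<omega> = c * (\<pi>Y \<bullet> Z \<omega>) + c * (\<xi>Y (U \<omega>) + \<zeta> \<omega>)" for \<omega>
  have f: "D' \<omega> - b * D \<omega> = f \<omega>" if "\<omega> \<in> space M" for \<omega>
    using D[OF that] eqY that unfolding f_def by (simp add: algebra_simps)
  have [measurable]: "f \<in> borel_measurable M" unfolding f_def by measurable
  have "AE \<omega> in M. real_cond_exp M (sigmaZ M Z) (\<lambda>\<omega>. D' \<omega> - b * D \<omega>) \<omega> = real_cond_exp M (sigmaZ M Z) f \<omega>"
    using f by (intro S.real_cond_exp_cong) auto
  moreover have "AE \<omega> in M. real_cond_exp M (sigmaZ M Z) f \<omega> =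
      real_cond_exp M (sigmaZ M Z) (\<lambda>\<omega>. c * (\<pi>Y \<bullet> Z \<omega>)) \<omega>
      + real_cond_exp M (sigmaZ M Z) (\<lambda>\<omega>. c * (\<xi>Y (U \<omega>) + \<zeta> \<omega>)) \<omega>"
    unfolding f_def using integrable_inner_Z i\<xi>Y i\<zeta> by (intro S.real_cond_exp_add) auto
  moreover have "AE \<omega> in M. real_cond_exp M (sigmaZ M Z) (\<lambda>\<omega>. c * (\<pi>Y \<bullet> Z \<omega>)) \<omega> = c * (\<pi>Y \<bullet> Z \<omega>)"
    using integrable_inner_Z measurable_sigmaZ[of "\<lambda>z. c * (\<pi>Y \<bullet> z)"]
    by (intro S.real_cond_exp_F_meas) auto
  moreover have "AE \<omega> in M. real_cond_exp M (sigmaZ M Z) (\<lambda>\<omega>. c * (\<xi>Y (U \<omega>) + \<zeta> \<omega>)) \<omega>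
      = c * real_cond_exp M (sigmaZ M Z) (\<lambda>\<omega>. \<xi>Y (U \<omega>) + \<zeta> \<omega>) \<omega>"
    using i\<xi>Y i\<zeta> by (intro S.real_cond_exp_cmult) auto
  ultimately show ?thesis using cond_exp_RY AE_space
    by eventually_elim (simp add: pch_residual_def f f_def)
qed

lemma integral_pch_residual_mult:
  assumes [measurable]: "L \<in> borel_measurable M" "D \<in> borel_measurable M"
    and L: "AE \<omega> in M. L \<omega> = c * (\<xi>Y (U \<omega>) + \<zeta> \<omega>)"
  shows "(\<integral>\<omega>. (L \<omega> * D \<omega>) *\<^sub>R Z \<omega> \<partial>M) = c *\<^sub>R (\<integral>\<omega>. (D \<omega> * (\<xi>Y (U \<omega>) + \<zeta> \<omega>)) *\<^sub>R Z \<omega> \<partial>M)"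
proof -
  have "(\<integral>\<omega>. (L \<omega> * D \<omega>) *\<^sub>R Z \<omega> \<partial>M) = (\<integral>\<omega>. c *\<^sub>R ((D \<omega> * (\<xi>Y (U \<omega>) + \<zeta> \<omega>)) *\<^sub>R Z \<omega>) \<partial>M)"
    using L by (intro integral_cong_AE) (auto simp: algebra_simps)
  then show ?thesis by (simp only: integral_scaleR_right)
qed

lemma integral_mult_Z_component_eq_zero:
  assumes "g \<in> borel_measurable MU" and int: "integrable M (\<lambda>\<omega>. g (U \<omega>) * Z \<omega> $ k)"
  shows "(\<integral>\<omega>. g (U \<omega>) * Z \<omega> $ k \<partial>M) = 0"
proof -
  interpret U: sigma_finite_subalgebra M sigmaU by (rule sigma_finite_sigmaU)
  have "(\<lambda>\<omega>. Z \<omega> $ k) \<in> borel_measurable (sigmaZ M Z)"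
    by (rule measurable_sigmaZ) measurable
  then have "AE \<omega> in M. real_cond_exp M sigmaU (\<lambda>\<omega>. Z \<omega> $ k) \<omega> = expectation (\<lambda>\<omega>. Z \<omega> $ k)"
    unfolding sigmaZ_def
    by (rule real_cond_exp_indep[OF indep_set_commute[OF indep] sigma_finite_sigmaU
          subalgebra_vimage_algebra[OF mZ] _ integrable_Z_component])
  then have "AE \<omega> in M. real_cond_exp M sigmaU (\<lambda>\<omega>. Z \<omega> $ k) \<omega> = 0"
    by (simp add: integral_Z_component)
  moreover have "(\<lambda>\<omega>. g (U \<omega>)) \<in> borel_measurable sigmaU"
    using assms(1) by (rule measurable_sigmaU)
  ultimately have "(\<integral>\<omega>. g (U \<omega>) * (0 + Z \<omega> $ k) \<partial>M) = (\<integral>\<omega>. g (U \<omega>) * 0 \<partial>M)"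
    using int by (intro U.integral_mult_add_cond_exp_zero(2) integrable_Z_component) auto
  then show ?thesis by simp
qed

lemma
  assumes "h \<in> borel_measurable borel" "integrable M (\<lambda>\<omega>. h (Z \<omega>))"
  shows integrable_mult_\<xi>Y: "integrable M (\<lambda>\<omega>. h (Z \<omega>) * \<xi>Y (U \<omega>))"
    and integral_mult_\<xi>Y: "(\<integral>\<omega>. h (Z \<omega>) * \<xi>Y (U \<omega>) \<partial>M) = 0"
proof -
  have "indep_var borel (\<lambda>\<omega>. h (Z \<omega>)) borel (\<lambda>\<omega>. \<xi>Y (U \<omega>))"
    using indep_var_subalgebras[OF indep subalgebra_vimage_algebra[OF mZ] subalgebra_vimage_algebra[OF mU]
        measurable_sigmaZ[unfolded sigmaZ_def, OF assms(1)] measurable_sigmaU[OF m\<xi>Y]] .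
  then show "integrable M (\<lambda>\<omega>. h (Z \<omega>) * \<xi>Y (U \<omega>))"
    and "(\<integral>\<omega>. h (Z \<omega>) * \<xi>Y (U \<omega>) \<partial>M) = 0"
    using indep_var_integrable[OF _ assms(2) i\<xi>Y] indep_var_lebesgue_integral[OF _ assms(2) i\<xi>Y] E\<xi>Y
    by simp_all
qed

lemma integral_eliminate_noise:
  assumes int: "integrable M (\<lambda>\<omega>. (X \<omega> - bYX * Y \<omega>) * (\<xi>Y (U \<omega>) + \<zeta> \<omega>) * Z \<omega> $ k)"
  shows "integrable M (\<lambda>\<omega>. Z \<omega> $ k * \<xi>Y (U \<omega>) * (\<pi>X \<bullet> Z \<omega> + \<xi>X (U \<omega>)))"
    and "(\<integral>\<omega>. (X \<omega> - bYX * Y \<omega>) * (\<xi>Y (U \<omega>) + \<zeta> \<omega>) * Z \<omega> $ k \<partial>M)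
       = (\<integral>\<omega>. Z \<omega> $ k * \<xi>Y (U \<omega>) * (\<pi>X \<bullet> Z \<omega> + \<xi>X (U \<omega>)) \<partial>M)"
proof -
  interpret G: sigma_finite_subalgebra M sigma\<eta>ZU by (rule sigma_finite_sigma\<eta>ZU)
  interpret H: sigma_finite_subalgebra M sigma\<zeta>ZU by (rule sigma_finite_sigma\<zeta>ZU)
  define A where "A \<omega> = (\<pi>X \<bullet> Z \<omega> + \<xi>X (U \<omega>) + \<eta> \<omega>) * Z \<omega> $ k" for \<omega>
  define B where "B \<omega> = Z \<omega> $ k * \<xi>Y (U \<omega>)" for \<omega>
  define c where "c \<omega> = \<pi>X \<bullet> Z \<omega> + \<xi>X (U \<omega>)" for \<omega>
  have AR: "(X \<omega> - bYX * Y \<omega>) * (\<xi>Y (U \<omega>) + \<zeta> \<omega>) * Z \<omega> $ k = A \<omega> * (\<xi>Y (U \<omega>) + \<zeta> \<omega>)"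
    if "\<omega> \<in> space M" for \<omega>
    using eqX that unfolding A_def by (simp add: algebra_simps)
  have AB: "A \<omega> * \<xi>Y (U \<omega>) = B \<omega> * (c \<omega> + \<eta> \<omega>)" for \<omega>
    unfolding A_def B_def c_def by (simp add: algebra_simps)
  have "A \<in> borel_measurable sigma\<eta>ZU"
    using measurable_sigma\<eta>ZU[of "\<lambda>(e, z, u). (\<pi>X \<bullet> z + \<xi>X u + e) * z $ k"] unfolding A_def by simp
  moreover have "(\<lambda>\<omega>. \<xi>Y (U \<omega>)) \<in> borel_measurable sigma\<eta>ZU"
    using measurable_sigma\<eta>ZU[of "\<lambda>(_, _, u). \<xi>Y u"] by simp
  moreover have "integrable M (\<lambda>\<omega>. A \<omega> * (\<xi>Y (U \<omega>) + \<zeta> \<omega>))"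
    using int by (rule Bochner_Integration.integrable_cong[THEN iffD1, OF refl, rotated]) (simp add: AR)
  ultimately have \<zeta>_free: "integrable M (\<lambda>\<omega>. A \<omega> * \<xi>Y (U \<omega>))"
      "(\<integral>\<omega>. A \<omega> * (\<xi>Y (U \<omega>) + \<zeta> \<omega>) \<partial>M) = (\<integral>\<omega>. A \<omega> * \<xi>Y (U \<omega>) \<partial>M)"
    using G.integral_mult_add_cond_exp_zero[OF _ _ i\<xi>Y i\<zeta> ce\<zeta>] by blast+
  have "B \<in> borel_measurable sigma\<zeta>ZU"
    using measurable_sigma\<zeta>ZU[of "\<lambda>(_, z, u). z $ k * \<xi>Y u"] unfolding B_def by simp
  moreover have "c \<in> borel_measurable sigma\<zeta>ZU"
    using measurable_sigma\<zeta>ZU[of "\<lambda>(_, z, u). \<pi>X \<bullet> z + \<xi>X u"] unfolding c_def by simp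
  moreover have "integrable M c" unfolding c_def using integrable_inner_Z i\<xi>X by simp
  moreover have "integrable M (\<lambda>\<omega>. B \<omega> * (c \<omega> + \<eta> \<omega>))" using \<zeta>_free(1) unfolding AB .
  ultimately have \<eta>_free: "integrable M (\<lambda>\<omega>. B \<omega> * c \<omega>)"
      "(\<integral>\<omega>. B \<omega> * (c \<omega> + \<eta> \<omega>) \<partial>M) = (\<integral>\<omega>. B \<omega> * c \<omega> \<partial>M)"
    using H.integral_mult_add_cond_exp_zero[OF _ _ _ i\<eta> ce\<eta>] by blast+
  from \<eta>_free(1) show "integrable M (\<lambda>\<omega>. Z \<omega> $ k * \<xi>Y (U \<omega>) * (\<pi>X \<bullet> Z \<omega> + \<xi>X (U \<omega>)))"
    unfolding B_def c_def .
  have "(\<integral>\<omega>. (X \<omega> - bYX * Y \<omega>) * (\<xi>Y (U \<omega>) + \<zeta> \<omega>) * Z \<omega> $ k \<partial>M)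
      = (\<integral>\<omega>. A \<omega> * (\<xi>Y (U \<omega>) + \<zeta> \<omega>) \<partial>M)"
    using AR by (rule Bochner_Integration.integral_cong[OF refl])
  also have "\<dots> = (\<integral>\<omega>. B \<omega> * c \<omega> \<partial>M)"
    unfolding \<zeta>_free(2) AB \<eta>_free(2) ..
  finally show "(\<integral>\<omega>. (X \<omega> - bYX * Y \<omega>) * (\<xi>Y (U \<omega>) + \<zeta> \<omega>) * Z \<omega> $ k \<partial>M)
       = (\<integral>\<omega>. Z \<omega> $ k * \<xi>Y (U \<omega>) * (\<pi>X \<bullet> Z \<omega> + \<xi>X (U \<omega>)) \<partial>M)"
    unfolding B_def c_def .
qed

lemma integral_Z_\<xi>Y_eq_zero:
  assumes int: "integrable M (\<lambda>\<omega>. Z \<omega> $ k * \<xi>Y (U \<omega>) * (\<pi>X \<bullet> Z \<omega> + \<xi>X (U \<omega>)))"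
  shows "(\<integral>\<omega>. Z \<omega> $ k * \<xi>Y (U \<omega>) * (\<pi>X \<bullet> Z \<omega> + \<xi>X (U \<omega>)) \<partial>M) = 0"
proof -
  define f where "f \<omega> = (\<pi>X \<bullet> Z \<omega>) * Z \<omega> $ k * \<xi>Y (U \<omega>)" for \<omega>
  define g where "g \<omega> = \<xi>Y (U \<omega>) * \<xi>X (U \<omega>) * Z \<omega> $ k" for \<omega>
  have split: "Z \<omega> $ k * \<xi>Y (U \<omega>) * (\<pi>X \<bullet> Z \<omega> + \<xi>X (U \<omega>)) = f \<omega> + g \<omega>" for \<omega>
    unfolding f_def g_def by (simp add: algebra_simps)
  have "integrable M (\<lambda>\<omega>. (\<pi>X \<bullet> Z \<omega>) * Z \<omega> $ k)"
    using integrable_inner_mult_component[OF Zmom] .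
  then have f: "integrable M f" "integral\<^sup>L M f = 0"
    unfolding f_def
    using integrable_mult_\<xi>Y[of "\<lambda>z. (\<pi>X \<bullet> z) * z $ k"] integral_mult_\<xi>Y[of "\<lambda>z. (\<pi>X \<bullet> z) * z $ k"]
    by simp_all
  have "integrable M (\<lambda>\<omega>. (f \<omega> + g \<omega>) - f \<omega>)"
    using int f(1) unfolding split by (rule Bochner_Integration.integrable_diff)
  then have g: "integrable M g" by simp
  then have "integral\<^sup>L M g = 0"
    unfolding g_def by (intro integral_mult_Z_component_eq_zero) auto
  with f g show ?thesis unfolding split by simp
qed

lemma integral_X_RY_Z:
  "(\<integral>\<omega>. (X \<omega> * (\<xi>Y (U \<omega>) + \<zeta> \<omega>)) *\<^sub>R Z \<omega> \<partial>M)
    = bYX *\<^sub>R (\<integral>\<omega>. (Y \<omega> * (\<xi>Y (U \<omega>) + \<zeta> \<omega>)) *\<^sub>R Z \<omega> \<partial>M)"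
proof (rule iffD2[OF vec_eq_iff], rule allI)
  fix k
  define R where "R \<omega> = \<xi>Y (U \<omega>) + \<zeta> \<omega>" for \<omega>
  have iX: "integrable M (\<lambda>\<omega>. X \<omega> * R \<omega> * Z \<omega> $ k)"
    using integrable_scaleR_vec_nth[OF momX] unfolding R_def .
  have iY: "integrable M (\<lambda>\<omega>. Y \<omega> * R \<omega> * Z \<omega> $ k)"
    using integrable_scaleR_vec_nth[OF momY] unfolding R_def .
  have diff: "(X \<omega> - bYX * Y \<omega>) * R \<omega> * Z \<omega> $ k = X \<omega> * R \<omega> * Z \<omega> $ k - bYX * (Y \<omega> * R \<omega> * Z \<omega> $ k)"
    for \<omega> by (simp add: algebra_simps)
  have "integrable M (\<lambda>\<omega>. (X \<omega> - bYX * Y \<omega>) * R \<omega> * Z \<omega> $ k)"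
    unfolding diff using iX iY by simp
  note structural = integral_eliminate_noise[OF this[unfolded R_def]]
  have "(\<integral>\<omega>. X \<omega> * R \<omega> * Z \<omega> $ k \<partial>M) - bYX * (\<integral>\<omega>. Y \<omega> * R \<omega> * Z \<omega> $ k \<partial>M)
      = (\<integral>\<omega>. (X \<omega> - bYX * Y \<omega>) * R \<omega> * Z \<omega> $ k \<partial>M)"
    unfolding diff using iX iY by simp
  also have "\<dots> = 0"
    unfolding R_def structural(2) using structural(1) by (rule integral_Z_\<xi>Y_eq_zero)
  finally show "(\<integral>\<omega>. (X \<omega> * (\<xi>Y (U \<omega>) + \<zeta> \<omega>)) *\<^sub>R Z \<omega> \<partial>M) $ k
      = (bYX *\<^sub>R (\<integral>\<omega>. (Y \<omega> * (\<xi>Y (U \<omega>) + \<zeta> \<omega>)) *\<^sub>R Z \<omega> \<partial>M)) $ k"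
    using integral_scaleR_vec_nth[OF momX] integral_scaleR_vec_nth[OF momY] unfolding R_def by simp
qed

lemma oPCH_XY:
  assumes inv: "invertible (SigmaZ M Z)"
    and count: "\<And>\<beta>. \<beta> \<noteq> bXY \<Longrightarrow> ratio_count gX gY \<beta> < ratio_count gX gY bXY"
    and cov: "(\<integral>\<omega>. (Y \<omega> * (\<xi>Y (U \<omega>) + \<zeta> \<omega>)) *\<^sub>R Z \<omega> \<partial>M) \<noteq> 0"
  shows "fst (oPCH M Z X Y gX gY) = ereal bXY" and "fst (snd (oPCH M Z X Y gX gY)) = ereal bYX"
proof -
  let ?L = "pch_residual M Z bXY X Y"
  have L: "AE \<omega> in M. ?L \<omega> = 1 * (\<xi>Y (U \<omega>) + \<zeta> \<omega>)"
    by (rule pch_residual_eq) simp_all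
  have "fst (snd (oPCH M Z X Y gX gY)) = projection_ratio (SigmaZ M Z)
      (\<integral>\<omega>. (?L \<omega> * X \<omega>) *\<^sub>R Z \<omega> \<partial>M) (\<integral>\<omega>. (?L \<omega> * Y \<omega>) *\<^sub>R Z \<omega> \<partial>M)"
    by (rule oPCH_unique_plurality(2)[OF count])
  also have "\<dots> = projection_ratio (SigmaZ M Z)
      (bYX *\<^sub>R (\<integral>\<omega>. (Y \<omega> * (\<xi>Y (U \<omega>) + \<zeta> \<omega>)) *\<^sub>R Z \<omega> \<partial>M))
      (1 *\<^sub>R (\<integral>\<omega>. (Y \<omega> * (\<xi>Y (U \<omega>) + \<zeta> \<omega>)) *\<^sub>R Z \<omega> \<partial>M))"
    using integral_pch_residual_mult[OF _ _ L] integral_X_RY_Z by simp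
  also have "\<dots> = ereal (bYX / 1)"
    by (rule projection_ratio_scaleR[OF inv SigmaZ_quadratic_form_nonzero[OF Zmom inv] cov one_neq_zero])
  finally show "fst (snd (oPCH M Z X Y gX gY)) = ereal bYX" by simp
  show "fst (oPCH M Z X Y gX gY) = ereal bXY" by (rule oPCH_unique_plurality(1)[OF count])
qed

lemma oPCH_YX:
  assumes inv: "invertible (SigmaZ M Z)" and "bXY \<noteq> 0" "bYX \<noteq> 0"
    and count: "\<And>\<beta>. \<beta> \<noteq> 1 / bXY \<Longrightarrow> ratio_count gY gX \<beta> < ratio_count gY gX (1 / bXY)"
    and cov: "(\<integral>\<omega>. (Y \<omega> * (\<xi>Y (U \<omega>) + \<zeta> \<omega>)) *\<^sub>R Z \<omega> \<partial>M) \<noteq> 0"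
  shows "fst (oPCH M Z Y X gY gX) = ereal (1 / bXY)" and "fst (snd (oPCH M Z Y X gY gX)) = ereal (1 / bYX)"
proof -
  let ?L = "pch_residual M Z (1 / bXY) Y X"
  define c where "c = - 1 / bXY"
  have L: "AE \<omega> in M. ?L \<omega> = c * (\<xi>Y (U \<omega>) + \<zeta> \<omega>)"
    by (rule pch_residual_eq) (use \<open>bXY \<noteq> 0\<close> in \<open>simp_all add: c_def field_simps\<close>)
  have "fst (snd (oPCH M Z Y X gY gX)) = projection_ratio (SigmaZ M Z)
      (\<integral>\<omega>. (?L \<omega> * Y \<omega>) *\<^sub>R Z \<omega> \<partial>M) (\<integral>\<omega>. (?L \<omega> * X \<omega>) *\<^sub>R Z \<omega> \<partial>M)"
    by (rule oPCH_unique_plurality(2)[OF count])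
  also have "\<dots> = projection_ratio (SigmaZ M Z)
      (c *\<^sub>R (\<integral>\<omega>. (Y \<omega> * (\<xi>Y (U \<omega>) + \<zeta> \<omega>)) *\<^sub>R Z \<omega> \<partial>M))
      ((c * bYX) *\<^sub>R (\<integral>\<omega>. (Y \<omega> * (\<xi>Y (U \<omega>) + \<zeta> \<omega>)) *\<^sub>R Z \<omega> \<partial>M))"
    using integral_pch_residual_mult[OF _ _ L] integral_X_RY_Z by simp
  also have "\<dots> = ereal (c / (c * bYX))"
    using \<open>bXY \<noteq> 0\<close> \<open>bYX \<noteq> 0\<close> unfolding c_def
    by (intro projection_ratio_scaleR[OF inv SigmaZ_quadratic_form_nonzero[OF Zmom inv] cov]) simp_all
  finally show "fst (snd (oPCH M Z Y X gY gX)) = ereal (1 / bYX)"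
    using \<open>bXY \<noteq> 0\<close> by (simp add: c_def)
  show "fst (oPCH M Z Y X gY gX) = ereal (1 / bXY)" by (rule oPCH_unique_plurality(1)[OF count])
qed

lemma oPCH_identifies_effects:
  assumes inv: "invertible (SigmaZ M Z)" and nz: "bXY \<noteq> 0" "bYX \<noteq> 0" and "bXY * bYX \<noteq> 1"
    and valid: "plurality_valid \<pi>X \<pi>Y gX"
    and cov: "(\<integral>\<omega>. (Y \<omega> * (\<xi>Y (U \<omega>) + \<zeta> \<omega>)) *\<^sub>R Z \<omega> \<partial>M) \<noteq> 0"
  shows "fst (oPCH M Z X Y gX gY) = ereal bXY" and "fst (snd (oPCH M Z X Y gX gY)) = ereal bYX"
    and "fst (oPCH M Z Y X gY gX) = ereal (1 / bXY)" and "fst (snd (oPCH M Z Y X gY gX)) = ereal (1 / bYX)"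
proof -
  note \<pi> = pi_eq_reduced_form[OF \<open>bXY * bYX \<noteq> 1\<close>]
  show "fst (oPCH M Z X Y gX gY) = ereal bXY" and "fst (snd (oPCH M Z X Y gX gY)) = ereal bYX"
    using oPCH_XY[OF inv ratio_count_lt_causal[OF \<pi> valid] cov] by auto
  show "fst (oPCH M Z Y X gY gX) = ereal (1 / bXY)" and "fst (snd (oPCH M Z Y X gY gX)) = ereal (1 / bYX)"
    using oPCH_YX[OF inv nz ratio_count_lt_reverse_causal[OF \<pi> nz valid] cov] by auto
qed

end

theorem theorem1:
  fixes M :: "'a measure" and MU :: "'u measure"
    and X Y \<zeta> \<eta> :: "'a \<Rightarrow> real" and Z :: "'a \<Rightarrow> real^'p" and U :: "'a \<Rightarrow> 'u"
    and \<xi>Y \<xi>X :: "'u \<Rightarrow> real" and \<pi>X \<pi>Y :: "real^'p" and bXY bYX :: real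
  defines "RY \<equiv> (\<lambda>\<omega>. \<xi>Y (U \<omega>) + \<zeta> \<omega>)"
      and "RX \<equiv> (\<lambda>\<omega>. \<xi>X (U \<omega>) + \<eta> \<omega>)"
      and "VXY \<equiv> {j. \<pi>X $ j \<noteq> 0 \<and> \<pi>Y $ j = 0}"
      and "VYX \<equiv> {j. \<pi>Y $ j \<noteq> 0 \<and> \<pi>X $ j = 0}"
      and "Vpl \<equiv> {j. \<pi>X $ j \<noteq> 0 \<and> \<pi>Y $ j \<noteq> 0}"
      and "SX \<equiv> {j. (gammaX bXY bYX \<pi>X \<pi>Y) $ j \<noteq> 0}"
      and "SY \<equiv> {j. (gammaY bXY bYX \<pi>X \<pi>Y) $ j \<noteq> 0}"
  assumes P: "prob_space M"
    and meas: "X \<in> borel_measurable M" "Y \<in> borel_measurable M" "Z \<in> borel_measurable M"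
       "\<zeta> \<in> borel_measurable M" "\<eta> \<in> borel_measurable M" "U \<in> measurable M MU"
       "\<xi>Y \<in> borel_measurable MU" "\<xi>X \<in> borel_measurable MU"
    and finvar: "integrable M (\<lambda>\<omega>. (X \<omega>)\<^sup>2)" "integrable M (\<lambda>\<omega>. (Y \<omega>)\<^sup>2)"
    and mean0: "integral\<^sup>L M X = 0" "integral\<^sup>L M Y = 0" "integral\<^sup>L M Z = 0"
    and Zmom: "\<And>i j. integrable M (\<lambda>\<omega>. Z \<omega> $ i * Z \<omega> $ j)"
    and Sig_inv: "invertible (SigmaZ M Z)"
    and eqY: "\<forall>\<omega>\<in>space M. Y \<omega> = bXY * X \<omega> + \<pi>Y \<bullet> Z \<omega> + \<xi>Y (U \<omega>) + \<zeta> \<omega>"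
    and eqX: "\<forall>\<omega>\<in>space M. X \<omega> = bYX * Y \<omega> + \<pi>X \<bullet> Z \<omega> + \<xi>X (U \<omega>) + \<eta> \<omega>"
    and xi0: "integrable M (\<lambda>\<omega>. \<xi>Y (U \<omega>))" "integral\<^sup>L M (\<lambda>\<omega>. \<xi>Y (U \<omega>)) = 0"
       "integrable M (\<lambda>\<omega>. \<xi>X (U \<omega>))" "integral\<^sup>L M (\<lambda>\<omega>. \<xi>X (U \<omega>)) = 0"
    and indep: "prob_space.indep_set M (sets (vimage_algebra (space M) Z borel)) (sets (vimage_algebra (space M) U MU))"
    and ce\<zeta>: "integrable M \<zeta>"
       "AE \<omega> in M. real_cond_exp M
          (vimage_algebra (space M) (\<lambda>\<omega>. (\<eta> \<omega>, Z \<omega>, U \<omega>)) (borel \<Otimes>\<^sub>M borel \<Otimes>\<^sub>M MU)) \<zeta> \<omega> = 0"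
    and ce\<eta>: "integrable M \<eta>"
       "AE \<omega> in M. real_cond_exp M
          (vimage_algebra (space M) (\<lambda>\<omega>. (\<zeta> \<omega>, Z \<omega>, U \<omega>)) (borel \<Otimes>\<^sub>M borel \<Otimes>\<^sub>M MU)) \<eta> \<omega> = 0"
    and moments: "integrable M (\<lambda>\<omega>. (Y \<omega> * RY \<omega>) *\<^sub>R Z \<omega>)"
       "integrable M (\<lambda>\<omega>. (X \<omega> * RY \<omega>) *\<^sub>R Z \<omega>)"
       "integrable M (\<lambda>\<omega>. (X \<omega> * RX \<omega>) *\<^sub>R Z \<omega>)"
       "integrable M (\<lambda>\<omega>. (Y \<omega> * RX \<omega>) *\<^sub>R Z \<omega>)"
    and specnorm: "onorm (\<lambda>v. Bmat bXY bYX *v v) < 1"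
    and AorA': "(card VXY > max (Max ((\<lambda>c. card {j \<in> Vpl \<inter> SX. \<pi>Y $ j / (gammaX bXY bYX \<pi>X \<pi>Y) $ j = c}) ` (UNIV :: real set)))
                              (max (if bYX \<noteq> 0 then card VYX else 0)
                                   (if bYX \<noteq> 0 then card (Vpl - SX) else 0))
              \<and> integral\<^sup>L M (\<lambda>\<omega>. (Y \<omega> * RY \<omega>) *\<^sub>R Z \<omega>)
                  - integral\<^sup>L M (\<lambda>\<omega>. Y \<omega> * RY \<omega>) *\<^sub>R integral\<^sup>L M Z \<noteq> 0)
             \<or> (card VYX > max (Max ((\<lambda>c. card {j \<in> Vpl \<inter> SY. \<pi>X $ j / (gammaY bXY bYX \<pi>X \<pi>Y) $ j = c}) ` (UNIV :: real set)))
                              (max (if bXY \<noteq> 0 then card VXY else 0)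
                                   (if bXY \<noteq> 0 then card (Vpl - SY) else 0))
              \<and> integral\<^sup>L M (\<lambda>\<omega>. (X \<omega> * RX \<omega>) *\<^sub>R Z \<omega>)
                  - integral\<^sup>L M (\<lambda>\<omega>. X \<omega> * RX \<omega>) *\<^sub>R integral\<^sup>L M Z \<noteq> 0)"
    and nz: "bXY * bYX \<noteq> 0"
  shows "(let I = oPCH M Z X Y (gammaX bXY bYX \<pi>X \<pi>Y) (gammaY bXY bYX \<pi>X \<pi>Y); II = oPCH M Z Y X (gammaY bXY bYX \<pi>X \<pi>Y) (gammaX bXY bYX \<pi>X \<pi>Y);
              bXY_I = fst I; bYX_I = fst (snd I);
              bYX_II = fst II; bXY_II = fst (snd II)
          in ((ereal bXY, ereal bYX) = (bXY_I, bYX_I) \<or> (ereal bXY, ereal bYX) = (bXY_II, bYX_II))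
             \<and> bXY_I = 1 / bYX_II \<and> bYX_I = 1 / bXY_II)"
proof -
  have nzX: "bXY \<noteq> 0" and nzY: "bYX \<noteq> 0" using nz by auto
  have k: "bXY * bYX \<noteq> 1" "bYX * bXY \<noteq> 1"
    using onorm_Bmat_less_one_abs_mult[OF specnorm] by (auto simp: mult.commute)
  have sem: "linear_sem M MU X Y \<zeta> \<eta> Z U \<xi>Y \<xi>X \<pi>X \<pi>Y bXY bYX"
    by (rule linear_sem.intro[OF P linear_sem_axioms.intro])
      (fact meas mean0(3) Zmom eqY eqX xi0 indep ce\<zeta> ce\<eta> moments(1,2)[unfolded RY_def])+
  have sem': "linear_sem M MU Y X \<eta> \<zeta> Z U \<xi>X \<xi>Y \<pi>Y \<pi>X bYX bXY"
    by (rule linear_sem.intro[OF P linear_sem_axioms.intro])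
      (fact meas mean0(3) Zmom eqY eqX xi0 indep ce\<zeta> ce\<eta> moments(3,4)[unfolded RX_def])+
  from AorA' show ?thesis
  proof (elim disjE conjE, goal_cases A A')
    case A
    have "plurality_valid \<pi>X \<pi>Y (gammaX bXY bYX \<pi>X \<pi>Y)"
      using A(1) nzY unfolding VXY_def VYX_def Vpl_def SX_def by (intro plurality_validI) simp
    moreover have "(\<integral>\<omega>. (Y \<omega> * (\<xi>Y (U \<omega>) + \<zeta> \<omega>)) *\<^sub>R Z \<omega> \<partial>M) \<noteq> 0"
      using A(2) mean0(3) unfolding RY_def by simp
    ultimately show ?thesis
      using linear_sem.oPCH_identifies_effects[OF sem Sig_inv nzX nzY k(1)] nzX nzY
      by (simp add: Let_def one_ereal_def)
  next
    case A'
    have "plurality_valid \<pi>Y \<pi>X (gammaY bXY bYX \<pi>X \<pi>Y)"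
      using A'(1) nzX unfolding VXY_def VYX_def Vpl_def SY_def
      by (intro plurality_validI) (simp add: conj_commute)
    moreover have "(\<integral>\<omega>. (X \<omega> * (\<xi>X (U \<omega>) + \<eta> \<omega>)) *\<^sub>R Z \<omega> \<partial>M) \<noteq> 0"
      using A'(2) mean0(3) unfolding RX_def by simp
    ultimately show ?thesis
      using linear_sem.oPCH_identifies_effects[OF sem' Sig_inv nzY nzX k(2),
          unfolded gammaX_swap[of bYX] gammaY_swap[of bYX]] nzX nzY
      by (simp add: Let_def one_ereal_def)
  qed
qed

end
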